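(* Let $n \in \mathbb{N}$ and work in $\mathbb{Z}_n$. Let $A_0, B_0$ be non-empty disjoint integer intervals contained in $\left(\frac{n}{8}, \frac{n}{4}\right)$ with $A_0 < B_0$. Let $B_1 \subseteq B_0$ be an integer interval, and set $A = A_0 \cup A_0^{-1}$ and $B = B_0 \cup B_0^{-1} \cup 2B_1 \cup 2B_1^{-1}$. Then $(A + B) \cap A = \emptyset$. Moreover, if $n$ is even then $\left(A + \left\{\frac{n}{2}\right\}\right) \cap A = \emptyset$, and if furthermore $\min(B_1) \geq \frac{3n}{16}$ then $\left(\left\{\frac{n}{2}\right\} + B\right) \cap A = \emptyset$.
   Context: In $\mathbb{Z}_n$ (integers under addition mod $n$), for subsets $X,Y$: $X+Y=\{x+y: x\in X, y\in Y\}$, $2X=X+X$, and $X^{-1}=\{-x: x\in X\}$ (so $2B_1^{-1}$ is $2(B_1^{-1})$, the set of negatives of elements of $2B_1$). $X<Y$ means $(x \bmod n)<(y\bmod n)$ for all $x\in X$, $y\in Y$. An integer interval in $\left(\frac n8,\frac n4\right)$ is a set of consecutive integers lying strictly between $n/8$ and $n/4$, viewed as residues mod $n$. *)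

theory Defs
  imports Complex_Main
begin

text \<open>Residues of Z_n are represented by integers in {0..<n}; all operations reduce mod n.\<close>

definition zsum :: "int \<Rightarrow> int set \<Rightarrow> int set \<Rightarrow> int set" where
  "zsum n X Y = {(x + y) mod n | x y. x \<in> X \<and> y \<in> Y}"

definition zneg :: "int \<Rightarrow> int set \<Rightarrow> int set" where
  "zneg n X = {(- x) mod n | x. x \<in> X}"

definition zdbl :: "int \<Rightarrow> int set \<Rightarrow> int set" where
  "zdbl n X = zsum n X X"

end

theory Submission
  imports Defs "HOL-Library.Set_Algebras"
begin

(* Lift to the integers: A and B are the reductions mod n of the symmetric sets +-A0 and
   +-(B0 \<union> (B1 + B1)), whose elements have absolute value below n/4 and n/2 respectively.
   A congruence x + y = z (mod n) between such lifts is then an equation in Z, and y = z - x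
   is impossible because |z - x| is either at most max A0 - min A0 < n/8 < min B0 or lies in
   [2 min A0, 2 max A0], strictly between max B0 < n/4 and 2 min B1.
   Likewise x + n/2 = z is impossible as |z - x| < n/2. Finally, as -n/2 = n/2 (mod n), a
   congruence n/2 + y = z forces |y - z| = n/2, hence n/4 < |y| < 3n/8, which excludes
   y in +-B0 and, by min B1 \<ge> 3n/16, also y in +-(B1 + B1). *)

definition pm :: "int set \<Rightarrow> int set" where
  "pm X = X \<union> uminus ` X"

lemma mem_pm_iff: "y \<in> pm X \<longleftrightarrow> y \<in> X \<or> - y \<in> X"
  unfolding pm_def by (auto intro: image_eqI[where x = "- y"])

lemma mem_pm_iff_abs:
  assumes "X \<subseteq> {0..}"
  shows "y \<in> pm X \<longleftrightarrow> \<bar>y\<bar> \<in> X"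
  using assms unfolding mem_pm_iff by (cases "0 \<le> y") auto

lemma zsum_eq_image_mod: "zsum n X Y = (\<lambda>s. s mod n) ` (X + Y)"
  unfolding zsum_def set_plus_def by auto

lemma zneg_eq_image_mod: "zneg n X = (\<lambda>s. s mod n) ` uminus ` X"
  unfolding zneg_def by auto

lemma zneg_Un: "zneg n (X \<union> Y) = zneg n X \<union> zneg n Y"
  unfolding zneg_eq_image_mod by auto

lemma image_mod_eq_self:
  fixes n :: int
  assumes "X \<subseteq> {0..<n}"
  shows "(\<lambda>x. x mod n) ` X = X"
  using assms by (force intro: image_eqI)

lemma Un_zneg_eq_image_mod_pm:
  fixes n :: int
  assumes "X \<subseteq> {0..<n}"
  shows "X \<union> zneg n X = (\<lambda>x. x mod n) ` pm X"
  unfolding pm_def image_Un image_mod_eq_self[OF assms] zneg_eq_image_mod ..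

lemma zdbl_eq_sumset:
  fixes n :: int
  assumes "X + X \<subseteq> {0..<n}"
  shows "zdbl n X = X + X"
  unfolding zdbl_def zsum_eq_image_mod using assms by (rule image_mod_eq_self)

lemma Un_zneg_zdbl_eq_image_mod_pm:
  fixes n :: int
  assumes "X \<subseteq> {0..<n}" "C + C \<subseteq> {0..<n}"
  shows "X \<union> zneg n X \<union> zdbl n C \<union> zneg n (zdbl n C) = (\<lambda>x. x mod n) ` pm (X \<union> (C + C))"
proof -
  have "X \<union> zneg n X \<union> zdbl n C \<union> zneg n (zdbl n C) = (X \<union> (C + C)) \<union> zneg n (X \<union> (C + C))"
    unfolding zdbl_eq_sumset[OF assms(2)] zneg_Un by blast
  also have "\<dots> = (\<lambda>x. x mod n) ` pm (X \<union> (C + C))"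
    using assms by (intro Un_zneg_eq_image_mod_pm) auto
  finally show ?thesis .
qed

lemma zsum_image_mod: "zsum n ((\<lambda>x. x mod n) ` X) ((\<lambda>y. y mod n) ` Y) = zsum n X Y"
proof -
  have "zsum n ((\<lambda>x. x mod n) ` X) ((\<lambda>y. y mod n) ` Y)
      = {(x mod n + y mod n) mod n | x y. x \<in> X \<and> y \<in> Y}"
    unfolding zsum_def by blast
  then show ?thesis
    unfolding zsum_def mod_add_eq .
qed

lemma zsum_inter_image_mod_eq_empty_iff:
  "zsum n X Y \<inter> (\<lambda>z. z mod n) ` Z = {}
    \<longleftrightarrow> (\<forall>x\<in>X. \<forall>y\<in>Y. \<forall>z\<in>Z. (x + y) mod n \<noteq> z mod n)"
  unfolding zsum_def by blast

lemma mod_eq_imp_eq_of_abs_diff_less: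
  fixes x y n :: int
  assumes "x mod n = y mod n" and "\<bar>x - y\<bar> < n"
  shows "x = y"
  using dvd_imp_le_int[of "x - y" n] assms by (auto simp: mod_eq_dvd_iff)

lemma abs_eq_of_mod_double_eq:
  fixes t m :: int
  assumes "t mod (2 * m) = m mod (2 * m)" and "\<bar>t\<bar> < 3 * m"
  shows "\<bar>t\<bar> = m"
proof (cases "0 \<le> t")
  case True
  have "\<bar>t - m\<bar> < 2 * m" using True assms(2) by linarith
  with assms(1) have "t = m" by (rule mod_eq_imp_eq_of_abs_diff_less)
  then show ?thesis using True by simp
next
  case False
  have "(- m) mod (2 * m) = m mod (2 * m)"
    unfolding mod_eq_dvd_iff by simp
  then have "t mod (2 * m) = (- m) mod (2 * m)" using assms(1) by simp
  moreover have "\<bar>t - - m\<bar> < 2 * m" using False assms(2) by linarith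
  ultimately have "t = - m" by (rule mod_eq_imp_eq_of_abs_diff_less)
  then show ?thesis using False by simp
qed

lemma sumset_subset_interval:
  fixes b0 b1 :: int
  assumes "C \<subseteq> {b0..b1}"
  shows "C + C \<subseteq> {2 * b0..2 * b1}"
proof
  fix s assume "s \<in> C + C"
  then obtain c c' where "s = c + c'" "c \<in> C" "c' \<in> C" by (rule set_plus_elim)
  moreover from this(2,3) assms have "c \<in> {b0..b1}" "c' \<in> {b0..b1}" by auto
  ultimately show "s \<in> {2 * b0..2 * b1}" by simp
qed

lemma abs_mem_pm_interval_sumset_cases:
  fixes b0 b1 y :: int
  assumes "0 \<le> b0" "C \<subseteq> {b0..b1}" "y \<in> pm ({b0..b1} \<union> (C + C))"
  obtains "b0 \<le> \<bar>y\<bar>" "\<bar>y\<bar> \<le> b1"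
    | c c' where "\<bar>y\<bar> = c + c'" "c \<in> C" "c' \<in> C"
proof -
  have "{b0..b1} \<union> (C + C) \<subseteq> {0..}"
    using assms(1) sumset_subset_interval[OF assms(2)] by auto
  then have "\<bar>y\<bar> \<in> {b0..b1} \<union> (C + C)"
    using assms(3) mem_pm_iff_abs by blast
  then show ?thesis
    using that by (auto elim!: set_plus_elim)
qed

lemma pm_add_pm_not_cong:
  fixes n a0 a1 b0 b1 x y z :: int and C :: "int set"
  assumes "0 \<le> n" "n < 8 * a0" "4 * a1 < n" "n < 8 * b0" "4 * b1 < n" "a1 < b0"
    and "C \<subseteq> {b0..b1}"
    and "x \<in> pm {a0..a1}" "y \<in> pm ({b0..b1} \<union> (C + C))" "z \<in> pm {a0..a1}"
  shows "(x + y) mod n \<noteq> z mod n"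
proof
  assume cong: "(x + y) mod n = z mod n"
  have "0 \<le> a0" "0 \<le> b0" using assms(1-5) by linarith+
  then have x: "a0 \<le> \<bar>x\<bar> \<and> \<bar>x\<bar> \<le> a1" and z: "a0 \<le> \<bar>z\<bar> \<and> \<bar>z\<bar> \<le> a1"
    using assms(8,10) mem_pm_iff_abs[of "{a0..a1}"] by auto
  from \<open>0 \<le> b0\<close> assms(7,9)
  have y: "b0 \<le> \<bar>y\<bar> \<and> \<bar>y\<bar> \<le> b1 \<or> 2 * b0 \<le> \<bar>y\<bar> \<and> \<bar>y\<bar> \<le> 2 * b1"
  proof (rule abs_mem_pm_interval_sumset_cases)
    fix c c' assume "\<bar>y\<bar> = c + c'" "c \<in> C" "c' \<in> C"
    then show ?thesis using sumset_subset_interval[OF assms(7)] by auto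
  qed simp
  have "\<bar>x + y - z\<bar> < n" using x y z assms(3,5) by arith
  with cong have "x + y = z" by (rule mod_eq_imp_eq_of_abs_diff_less)
  then show False using x y z assms(2-6) by arith
qed

lemma pm_add_half_not_cong:
  fixes m a0 a1 x z :: int
  assumes "0 \<le> a0" "2 * a1 < m" "x \<in> pm {a0..a1}" "z \<in> pm {a0..a1}"
  shows "(x + m) mod (2 * m) \<noteq> z mod (2 * m)"
proof
  assume cong: "(x + m) mod (2 * m) = z mod (2 * m)"
  have x: "a0 \<le> \<bar>x\<bar> \<and> \<bar>x\<bar> \<le> a1" and z: "a0 \<le> \<bar>z\<bar> \<and> \<bar>z\<bar> \<le> a1"
    using assms mem_pm_iff_abs[of "{a0..a1}"] by auto
  have "\<bar>x + m - z\<bar> < 2 * m" using x z assms(2) by arith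
  with cong have "x + m = z" by (rule mod_eq_imp_eq_of_abs_diff_less)
  then show False using x z assms(2) by arith
qed

lemma half_add_pm_not_cong:
  fixes m a0 a1 b0 b1 y z :: int and C :: "int set"
  assumes "0 \<le> m" "m < 4 * a0" "2 * a1 < m" "2 * b1 < m" "0 \<le> b0"
    and "C \<subseteq> {b0..b1}" "\<forall>c\<in>C. 3 * m \<le> 8 * c"
    and "y \<in> pm ({b0..b1} \<union> (C + C))" "z \<in> pm {a0..a1}"
  shows "(m + y) mod (2 * m) \<noteq> z mod (2 * m)"
proof
  assume "(m + y) mod (2 * m) = z mod (2 * m)"
  then have "2 * m dvd (m + y - z) - 2 * m"
    unfolding mod_eq_dvd_iff by (rule dvd_diff) simp
  also have "(m + y - z) - 2 * m = (y - z) - m" by simp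
  finally have cong: "(y - z) mod (2 * m) = m mod (2 * m)"
    unfolding mod_eq_dvd_iff .
  have "0 \<le> a0" using assms(1,2) by linarith
  then have z: "a0 \<le> \<bar>z\<bar> \<and> \<bar>z\<bar> \<le> a1"
    using assms(9) mem_pm_iff_abs[of "{a0..a1}"] by auto
  from assms(5,6,8) have y: "\<bar>y\<bar> \<le> b1 \<or> 3 * m \<le> 4 * \<bar>y\<bar> \<and> \<bar>y\<bar> \<le> 2 * b1"
  proof (rule abs_mem_pm_interval_sumset_cases)
    fix c c' assume y: "\<bar>y\<bar> = c + c'" and "c \<in> C" "c' \<in> C"
    then have "c \<le> b1" "c' \<le> b1" "3 * m \<le> 8 * c" "3 * m \<le> 8 * c'"
      using assms(6,7) by auto
    then show ?thesis using y by linarith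
  qed simp
  have "\<bar>y - z\<bar> < 3 * m" using y z assms(3,4) by arith
  with cong have "\<bar>y - z\<bar> = m" by (rule abs_eq_of_mod_double_eq)
  then show False using y z assms(2-4) by arith
qed

theorem lemma3p2:
  fixes n :: nat and a0 a1 b0 b1 c0 c1 :: int
  assumes "a0 \<le> a1" and "b0 \<le> b1"
    and "real n / 8 < real_of_int a0" and "real_of_int a1 < real n / 4"
    and "real n / 8 < real_of_int b0" and "real_of_int b1 < real n / 4"
    and "\<forall>x\<in>{a0..a1}. \<forall>y\<in>{b0..b1}. x < y"
    and "{c0..c1} \<subseteq> {b0..b1}"
  defines "A \<equiv> {a0..a1} \<union> zneg (int n) {a0..a1}"
    and "B \<equiv> {b0..b1} \<union> zneg (int n) {b0..b1} \<union> zdbl (int n) {c0..c1}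
              \<union> zneg (int n) (zdbl (int n) {c0..c1})"
  shows "zsum (int n) A B \<inter> A = {}
         \<and> (even n \<longrightarrow> zsum (int n) A {int n div 2} \<inter> A = {})
         \<and> (even n \<and> (\<forall>x\<in>{c0..c1}. 3 * real n / 16 \<le> real_of_int x)
              \<longrightarrow> zsum (int n) {int n div 2} B \<inter> A = {})"
proof -
  let ?N = "int n" and ?red = "\<lambda>x. x mod int n" and ?C = "{c0..c1}"
  have bounds: "?N < 8 * a0" "4 * a1 < ?N" "?N < 8 * b0" "4 * b1 < ?N"
    using assms(3-6) by linarith+
  have "a1 < b0" using assms(1,2,7) by auto
  have A: "A = ?red ` pm {a0..a1}"
    unfolding A_def using bounds by (intro Un_zneg_eq_image_mod_pm) auto
  have B: "B = ?red ` pm ({b0..b1} \<union> (?C + ?C))"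
    unfolding B_def using sumset_subset_interval[OF assms(8)] bounds
    by (intro Un_zneg_zdbl_eq_image_mod_pm) auto
  have "zsum ?N A B \<inter> A = {}"
    unfolding A B zsum_image_mod zsum_inter_image_mod_eq_empty_iff
    using pm_add_pm_not_cong[OF of_nat_0_le_iff bounds \<open>a1 < b0\<close> assms(8)] by blast
  moreover have "zsum ?N A {?N div 2} \<inter> A = {}
      \<and> ((\<forall>x\<in>?C. 3 * real n / 16 \<le> real_of_int x) \<longrightarrow> zsum ?N {?N div 2} B \<inter> A = {})"
    if "even n"
  proof -
    from that obtain m where m: "?N = 2 * m" by (metis evenE of_nat_mult of_nat_numeral)
    have half: "{?N div 2} = ?red ` {m}" using m bounds by auto
    have "0 \<le> m" "0 \<le> a0" "2 * a1 < m" "2 * b1 < m" "m < 4 * a0" "0 \<le> b0"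
      using bounds m by linarith+
    have "zsum ?N A {?N div 2} \<inter> A = {}"
      unfolding A half zsum_image_mod zsum_inter_image_mod_eq_empty_iff
      using pm_add_half_not_cong[OF \<open>0 \<le> a0\<close> \<open>2 * a1 < m\<close>, folded m] by blast
    moreover have "zsum ?N {?N div 2} B \<inter> A = {}"
      if "\<forall>x\<in>?C. 3 * real n / 16 \<le> real_of_int x"
    proof -
      have "real n = 2 * real_of_int m" using m by linarith
      then have "\<forall>c\<in>?C. 3 * m \<le> 8 * c" using that by auto
      then show ?thesis
        unfolding A B half zsum_image_mod zsum_inter_image_mod_eq_empty_iff
        using half_add_pm_not_cong[OF \<open>0 \<le> m\<close> \<open>m < 4 * a0\<close> \<open>2 * a1 < m\<close>
            \<open>2 * b1 < m\<close> \<open>0 \<le> b0\<close> assms(8), folded m] by blast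
    qed
    ultimately show ?thesis by blast
  qed
  ultimately show ?thesis by blast
qed

end
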